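(* Let $\mathfrak{A}$ be a $(\circ,\wedge,\mathsf{A})$-algebra that is representable by partial functions. Then composition is completely right-distributive over joins: for every subset $S\subseteq\mathfrak{A}$ such that $\bigvee S$ exists and every $a\in\mathfrak{A}$, the join $\bigvee\{s\circ a\mid s\in S\}$ exists and equals $(\bigvee S)\circ a$.
   Context: A $(\circ,\wedge,\mathsf{A})$-algebra is a set with two binary operations $\circ,\wedge$ and one unary operation $\mathsf{A}$. An algebra of partial functions of this signature is a set of partial functions, with base $X$ the union of all their domains and ranges, closed under: composition $f\circ g=\{(x,z)\mid \exists y\,(x,y)\in f,(y,z)\in g\}$ (apply $f$ first, then $g$); intersection; antidomain $\mathsf{A}(f)=\{(x,x)\mid x\in X, x\notin\mathrm{dom}(f)\}$. A representation by partial functions is an isomorphism onto such an algebra; $\mathfrak{A}$ is representable if one exists. Joins and meets are taken in the order $a\le b\iff a\wedge b=a$. *)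

theory Defs
  imports Main
begin

text \<open>A (cmp, meet, A)-algebra is given by a carrier type 'a and three operations.
  Composition f;g applies f first, then g, i.e. relational composition f O g.\<close>

definition base_set :: "('a \<Rightarrow> ('x \<times> 'x) set) \<Rightarrow> 'x set" where
  "base_set h = (\<Union>a. Domain (h a) \<union> Range (h a))"

definition rep_antidom :: "'x set \<Rightarrow> ('x \<times> 'x) set \<Rightarrow> ('x \<times> 'x) set" where
  "rep_antidom X f = {(x, x) | x. x \<in> X \<and> x \<notin> Domain f}"

definition is_pfun_representation ::
  "('a \<Rightarrow> 'a \<Rightarrow> 'a) \<Rightarrow> ('a \<Rightarrow> 'a \<Rightarrow> 'a) \<Rightarrow> ('a \<Rightarrow> 'a) \<Rightarrow> ('a \<Rightarrow> ('x \<times> 'x) set) \<Rightarrow> bool" where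
  "is_pfun_representation cmp meet antidom h \<longleftrightarrow>
     inj h \<and>
     (\<forall>a. single_valued (h a)) \<and>
     (\<forall>a b. h (cmp a b) = h a O h b) \<and>
     (\<forall>a b. h (meet a b) = h a \<inter> h b) \<and>
     (\<forall>a. h (antidom a) = rep_antidom (base_set h) (h a))"

definition alg_le :: "('a \<Rightarrow> 'a \<Rightarrow> 'a) \<Rightarrow> 'a \<Rightarrow> 'a \<Rightarrow> bool" where
  "alg_le meet a b \<longleftrightarrow> meet a b = a"

definition is_join :: "('a \<Rightarrow> 'a \<Rightarrow> 'a) \<Rightarrow> 'a set \<Rightarrow> 'a \<Rightarrow> bool" where
  "is_join meet S j \<longleftrightarrow>
     (\<forall>s\<in>S. alg_le meet s j) \<and> (\<forall>u. (\<forall>s\<in>S. alg_le meet s u) \<longrightarrow> alg_le meet j u)"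

end

theory Submission
  imports Defs
begin

(* The order of the algebra is
   inclusion of the represented relations, so a join j of S is the least
   representable relation above all h s.  The upper-bound half of the claim is
   monotonicity of relational composition.  For leastness, let u be an upper
   bound of all s;a.  With antidomain one can represent the restriction w of
   h j to those points x at which, if j;a is defined at x, then j;a and u agree
   at x.  Every h s (s in S) lies below w, because h j is a partial function;
   hence h j lies below w, and since j;a is a partial function this says
   exactly that h (j;a) is contained in h u. *)

definition agree_set :: "('x \<times> 'x) set \<Rightarrow> ('x \<times> 'x) set \<Rightarrow> 'x set" where
  "agree_set F U = {x. x \<in> Domain F \<longrightarrow> x \<in> Domain (F \<inter> U)}"

text \<open>A subrelation \<open>S\<close> of a partial function \<open>J\<close> with \<open>S O A \<subseteq> U\<close> only lives on
  points where \<open>J O A\<close> agrees with \<open>U\<close>: there \<open>J\<close> and \<open>S\<close> take the same value.\<close>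

lemma sub_pfun_within_agree_set:
  assumes "single_valued J" and "S \<subseteq> J" and "S O A \<subseteq> U"
  shows "S \<subseteq> {(x, y) \<in> J. x \<in> agree_set (J O A) U}"
proof (rule subrelI)
  fix x y assume xy: "(x, y) \<in> S"
  then have "(x, y) \<in> J" using assms(2) by blast
  have "x \<in> Domain (J O A \<inter> U)" if "x \<in> Domain (J O A)"
  proof -
    from that obtain y' z where "(x, y') \<in> J" "(y', z) \<in> A" by blast
    with \<open>(x, y) \<in> J\<close> assms(1) have "(y, z) \<in> A" by (metis single_valued_def)
    with xy assms(3) \<open>(x, y') \<in> J\<close> \<open>(y', z) \<in> A\<close> show ?thesis by blast
  qed
  with \<open>(x, y) \<in> J\<close> show "(x, y) \<in> {(x, y) \<in> J. x \<in> agree_set (J O A) U}"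
    unfolding agree_set_def by blast
qed

lemma pfun_below_if_agree_everywhere:
  assumes "single_valued F" and "Domain F \<subseteq> agree_set F U"
  shows "F \<subseteq> U"
proof (rule subrelI)
  fix x z assume xz: "(x, z) \<in> F"
  then obtain z' where "(x, z') \<in> F" "(x, z') \<in> U"
    using assms(2) unfolding agree_set_def by blast
  with xz assms(1) show "(x, z) \<in> U" by (metis single_valued_def)
qed

lemma Id_on_relcomp: "Id_on P O R = {(x, y) \<in> R. x \<in> P}"
  by auto

locale pfun_rep =
  fixes cmp meet :: "'a \<Rightarrow> 'a \<Rightarrow> 'a" and antidom :: "'a \<Rightarrow> 'a"
    and h :: "'a \<Rightarrow> ('x \<times> 'x) set"
  assumes rep: "is_pfun_representation cmp meet antidom h"
begin

lemma rep_inj: "inj h"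
  and rep_single_valued: "single_valued (h b)"
  and rep_cmp: "h (cmp b c) = h b O h c"
  and rep_meet: "h (meet b c) = h b \<inter> h c"
  using rep unfolding is_pfun_representation_def by auto

lemma Domain_subset_base: "Domain (h b) \<subseteq> base_set h"
  unfolding base_set_def by blast

lemma rep_antidom_Id_on: "h (antidom b) = Id_on (base_set h - Domain (h b))"
  using rep unfolding is_pfun_representation_def rep_antidom_def Id_on_def by auto

lemma rep_domain_Id_on: "h (antidom (antidom b)) = Id_on (Domain (h b))"
  using Domain_subset_base[of b] unfolding rep_antidom_Id_on by auto

lemma alg_le_iff_subset: "alg_le meet b c \<longleftrightarrow> h b \<subseteq> h c"
proof -
  have "alg_le meet b c \<longleftrightarrow> h (meet b c) = h b"
    unfolding alg_le_def using rep_inj by (metis injD)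
  then show ?thesis using rep_meet by auto
qed

lemma is_join_iff:
  "is_join meet S j \<longleftrightarrow>
     (\<forall>s\<in>S. h s \<subseteq> h j) \<and> (\<forall>u. (\<forall>s\<in>S. h s \<subseteq> h u) \<longrightarrow> h j \<subseteq> h u)"
  unfolding is_join_def alg_le_iff_subset ..

text \<open>Restricting an element to the points where \<open>b\<close>, if defined, agrees with \<open>c\<close>
  is again an element: precompose with the test \<open>\<not>(dom b \<and> \<not> dom (b \<and> c))\<close>.\<close>

lemma agree_restriction_representable:
  "\<exists>w. h w = {(x, y) \<in> h j. x \<in> agree_set (h b) (h c)}"
proof
  let ?t = "antidom (meet (antidom (meet b c)) (antidom (antidom b)))"
  have test: "h ?t = Id_on (base_set h \<inter> agree_set (h b) (h c))"
    using Domain_subset_base[of b]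
    unfolding rep_antidom_Id_on rep_domain_Id_on rep_meet agree_set_def by auto
  show "h (cmp ?t j) = {(x, y) \<in> h j. x \<in> agree_set (h b) (h c)}"
    using Domain_subset_base[of j] unfolding rep_cmp test Id_on_relcomp by blast
qed

theorem cmp_join_right_distrib:
  assumes "is_join meet S j"
  shows "is_join meet ((\<lambda>s. cmp s a) ` S) (cmp j a)"
  unfolding is_join_iff
proof (intro conjI allI impI)
  have upper: "\<forall>s\<in>S. h s \<subseteq> h j"
    and least: "\<And>u. \<forall>s\<in>S. h s \<subseteq> h u \<Longrightarrow> h j \<subseteq> h u"
    using assms unfolding is_join_iff by auto
  show "\<forall>t\<in>(\<lambda>s. cmp s a) ` S. h t \<subseteq> h (cmp j a)"
    using upper by (auto simp: rep_cmp)
  fix u assume "\<forall>t\<in>(\<lambda>s. cmp s a) ` S. h t \<subseteq> h u"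
  then have bound: "\<forall>s\<in>S. h s O h a \<subseteq> h u"
    unfolding rep_cmp [symmetric] by blast
  from agree_restriction_representable[of j "cmp j a" u]
  obtain w where w: "h w = {(x, y) \<in> h j. x \<in> agree_set (h j O h a) (h u)}"
    unfolding rep_cmp ..
  have "\<forall>s\<in>S. h s \<subseteq> h w"
  proof
    fix s assume "s \<in> S"
    with upper bound show "h s \<subseteq> h w"
      unfolding w by (intro sub_pfun_within_agree_set rep_single_valued) auto
  qed
  then have "h j \<subseteq> h w" by (rule least)
  then have "Domain (h j O h a) \<subseteq> agree_set (h j O h a) (h u)"
    unfolding w by blast
  then show "h (cmp j a) \<subseteq> h u"
    unfolding rep_cmp
    by (intro pfun_below_if_agree_everywhere single_valued_relcomp rep_single_valued)
qed

end

theorem mainTheorem9: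
  fixes cmp meet :: "'a \<Rightarrow> 'a \<Rightarrow> 'a" and antidom :: "'a \<Rightarrow> 'a"
  assumes "\<exists>h :: 'a \<Rightarrow> ('x \<times> 'x) set. is_pfun_representation cmp meet antidom h"
  shows "\<forall>S j a. is_join meet S j \<longrightarrow> is_join meet ((\<lambda>s. cmp s a) ` S) (cmp j a)"
proof -
  obtain h :: "'a \<Rightarrow> ('x \<times> 'x) set" where "is_pfun_representation cmp meet antidom h"
    using assms by blast
  then interpret pfun_rep cmp meet antidom h by unfold_locales
  show ?thesis using cmp_join_right_distrib by blast
qed

end
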